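(* Let $(\mathcal A,\mathcal B)$ be a $(\theta,\theta)$ pair. Then $(\mathcal A,\mathcal B)$ is nice if and only if for every two families $X=\{x_u:u<\theta\}$ and $Y=\{y_v:v<\theta\}$, each consisting of pairwise disjoint finite subsets of $\theta$, every $X$-sequence $S$ and every $Y$-sequence $T$, the product partial order $\mathcal Q(X,S)\times\mathcal Q(Y,T)$ has the $\kappa$-chain condition (every antichain has size $<\kappa$).
   Context: Standing assumptions: $\theta$ is a singular cardinal of uncountable cofinality, $\kappa=\mathrm{cf}(\theta)$, and $\langle\theta_\alpha:\alpha<\kappa\rangle$ is a fixed increasing sequence of cardinals converging to $\theta$ with $\theta_0>\kappa$. A $(\theta,\theta)$ pair is $(\mathcal A,\mathcal B)$ with $\mathcal A=\{a_\xi:\xi<\theta\}$, $\mathcal B=\{b_\xi:\xi<\theta\}$ subsets of $\omega$ such that $a_\xi\cap b_\eta$ is finite for all $\xi,\eta<\theta$. For finite $x\subseteq\theta$, $a(x)=\bigcap_{\xi\in x}a_\xi$, $b(x)=\bigcap_{\xi\in x}b_\xi$, with $a(\emptyset)=b(\emptyset)=\omega$. The pair is nice if for every family $\{x_i:i<\theta\}$ of pairwise disjoint finite subsets of $\theta$ there are $i,j<\theta$ with $a(x_i)\cap b(x_j)\ne\emptyset$. Given a family $X=\{x_i:i<\theta\}$ of pairwise disjoint finite subsets of $\theta$, an $X$-sequence is $S=\{S_\alpha:\alpha<\kappa\}$ where the $S_\alpha$ are pairwise disjoint subsets of $\theta$, $|S_\alpha|>\theta_\alpha$, and $a(x_i)\cap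 b(x_j)=\emptyset$ for all $i,j\in S_\alpha$, for every $\alpha<\kappa$. $\mathcal Q(X,S)$ is the set of finite $F\subseteq\kappa$ such that for all distinct $\alpha,\beta\in F$ there exist $i\in S_\alpha$, $j\in S_\beta$ with $a(x_i)\cap b(x_j)\neq\emptyset$ or $b(x_i)\cap a(x_j)\ne\emptyset$; it is ordered by inclusion (two conditions are compatible iff their union is in the poset). *)

theory Defs
  imports Main
begin


definition is_cofinality :: "'b rel \<Rightarrow> 'a rel \<Rightarrow> bool" where
  "is_cofinality k r \<longleftrightarrow>
     (\<exists>C. C \<subseteq> Field r \<and> cofinal C r \<and> (card_of (C), k) \<in> ordIso) \<and>
     (\<forall>C. C \<subseteq> Field r \<and> cofinal C r \<longrightarrow> (k, card_of (C)) \<in> ordLeq)"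

text \<open>a(x) = intersection of a_xi over xi in x; the empty intersection is UNIV = omega.\<close>
definition capA :: "('a \<Rightarrow> nat set) \<Rightarrow> 'a set \<Rightarrow> nat set" where
  "capA a x = (\<Inter>\<xi>\<in>x. a \<xi>)"

definition theta_pair :: "'a set \<Rightarrow> ('a \<Rightarrow> nat set) \<Rightarrow> ('a \<Rightarrow> nat set) \<Rightarrow> bool" where
  "theta_pair \<Theta> a b \<longleftrightarrow> (\<forall>\<xi>\<in>\<Theta>. \<forall>\<eta>\<in>\<Theta>. finite (a \<xi> \<inter> b \<eta>))"

definition disj_fin_family :: "'a set \<Rightarrow> ('a \<Rightarrow> 'a set) \<Rightarrow> bool" where
  "disj_fin_family \<Theta> x \<longleftrightarrow>
     (\<forall>i\<in>\<Theta>. finite (x i) \<and> x i \<subseteq> \<Theta>) \<and>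
     (\<forall>i\<in>\<Theta>. \<forall>j\<in>\<Theta>. i \<noteq> j \<longrightarrow> x i \<inter> x j = {})"

definition nice_pair :: "'a set \<Rightarrow> ('a \<Rightarrow> nat set) \<Rightarrow> ('a \<Rightarrow> nat set) \<Rightarrow> bool" where
  "nice_pair \<Theta> a b \<longleftrightarrow>
     (\<forall>x. disj_fin_family \<Theta> x \<longrightarrow>
        (\<exists>i\<in>\<Theta>. \<exists>j\<in>\<Theta>. capA a (x i) \<inter> capA b (x j) \<noteq> {}))"

text \<open>X-sequence: K is the index set for alpha < kappa, th alpha a set of cardinality theta_alpha.\<close>
definition X_sequence ::
  "'a set \<Rightarrow> 'b set \<Rightarrow> ('b \<Rightarrow> 'a set) \<Rightarrow> ('a \<Rightarrow> nat set) \<Rightarrow> ('a \<Rightarrow> nat set)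
   \<Rightarrow> ('a \<Rightarrow> 'a set) \<Rightarrow> ('b \<Rightarrow> 'a set) \<Rightarrow> bool" where
  "X_sequence \<Theta> K th a b x S \<longleftrightarrow>
     (\<forall>\<alpha>\<in>K. S \<alpha> \<subseteq> \<Theta>) \<and>
     (\<forall>\<alpha>\<in>K. \<forall>\<beta>\<in>K. \<alpha> \<noteq> \<beta> \<longrightarrow> S \<alpha> \<inter> S \<beta> = {}) \<and>
     (\<forall>\<alpha>\<in>K. (card_of (th \<alpha>), card_of (S \<alpha>)) \<in> ordLess) \<and>
     (\<forall>\<alpha>\<in>K. \<forall>i\<in>S \<alpha>. \<forall>j\<in>S \<alpha>. capA a (x i) \<inter> capA b (x j) = {})"

definition Qposet ::
  "'b set \<Rightarrow> ('a \<Rightarrow> nat set) \<Rightarrow> ('a \<Rightarrow> nat set) \<Rightarrow> ('a \<Rightarrow> 'a set) \<Rightarrow> ('b \<Rightarrow> 'a set)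
   \<Rightarrow> 'b set set" where
  "Qposet K a b x S = {F. finite F \<and> F \<subseteq> K \<and>
     (\<forall>\<alpha>\<in>F. \<forall>\<beta>\<in>F. \<alpha> \<noteq> \<beta> \<longrightarrow>
        (\<exists>i\<in>S \<alpha>. \<exists>j\<in>S \<beta>. capA a (x i) \<inter> capA b (x j) \<noteq> {} \<or> capA b (x i) \<inter> capA a (x j) \<noteq> {}))}"

text \<open>Product poset Q1 x Q2 ordered by inclusion coordinatewise; two conditions are compatible
  iff the coordinatewise union is a condition.\<close>
definition prod_compatible :: "'b set set \<Rightarrow> 'b set set \<Rightarrow> ('b set \<times> 'b set) \<Rightarrow> ('b set \<times> 'b set) \<Rightarrow> bool" where
  "prod_compatible Q1 Q2 p q \<longleftrightarrow> fst p \<union> fst q \<in> Q1 \<and> snd p \<union> snd q \<in> Q2"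

definition prod_antichain :: "'b set set \<Rightarrow> 'b set set \<Rightarrow> ('b set \<times> 'b set) set \<Rightarrow> bool" where
  "prod_antichain Q1 Q2 A \<longleftrightarrow> A \<subseteq> Q1 \<times> Q2 \<and>
     (\<forall>p\<in>A. \<forall>q\<in>A. p \<noteq> q \<longrightarrow> \<not> prod_compatible Q1 Q2 p q)"

definition prod_kappa_cc :: "'b set \<Rightarrow> 'b set set \<Rightarrow> 'b set set \<Rightarrow> bool" where
  "prod_kappa_cc K Q1 Q2 \<longleftrightarrow> (\<forall>A. prod_antichain Q1 Q2 A \<longrightarrow> (card_of (A), card_of (K)) \<in> ordLess)"

end

(*
  (<=) If z witnesses that the pair is not nice, spreading z over kappa disjoint copies of theta
  gives an X-sequence S for which Q(z,S) has no two-element conditions, so the pairs of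
  singletons ({alpha},{alpha}) form an antichain of size kappa in Q(z,S) x Q(z,S).

  (=>) kappa = cf theta is regular and uncountable, so an antichain of size kappa in
  Q(X,S) x Q(Y,T) contains a Delta-system of size kappa.  Two members of it are incompatible
  only because of a pair of separated indices outside the roots.  Choosing one x_i from S_alpha
  (resp. y_j from T_alpha) for every index alpha outside the root of a member yields finite sets
  Z that are pairwise a/b-separated: a(Z) and b(Z') are always disjoint.  Since
  |S_alpha| > theta_alpha and the theta_alpha are cofinal in theta, the choices can avoid any
  set of size < theta, so a maximal disjoint family of such Z has size theta, contradicting
  niceness.
*)

theory Submission
  imports Defs "HOL-Library.Disjoint_Sets"
begin

unbundle cardinal_syntax

lemma finite_ordLess_infinite_Card_order:
  assumes "Card_order k" "\<not> finite (Field k)" "finite A"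
  shows "|A| <o k"
  using finite_ordLess_infinite[OF card_of_Well_order[of A] card_order_on_well_order_on[OF assms(1)]] assms(2,3)
  by (simp add: Field_card_of)

lemma not_ordLeq_card_of_iff:
  assumes "Card_order k"
  shows "\<not> k \<le>o |A| \<longleftrightarrow> |A| <o k"
  using not_ordLeq_iff_ordLess[OF card_of_Well_order card_order_on_well_order_on[OF assms]] .

lemma card_of_UN_finite_ordLess:
  assumes r: "Card_order r" "\<not> finite (Field r)" and I: "|I| <o r"
    and fin: "\<And>i. i \<in> I \<Longrightarrow> finite (Z i)"
  shows "|\<Union>i\<in>I. Z i| <o r"
proof (cases "finite I")
  case True
  then have "finite (\<Union>i\<in>I. Z i)" using fin by blast
  then show ?thesis by (rule finite_ordLess_infinite_Card_order[OF r])
next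
  case False
  have "|Z i| \<le>o |I|" if "i \<in> I" for i
    using finite_ordLess_infinite[OF card_of_Well_order card_of_Well_order, of "Z i" I] fin[OF that] False
    unfolding Field_card_of by (blast intro: ordLess_imp_ordLeq)
  then have "|\<Union>i\<in>I. Z i| \<le>o |I|"
    by (intro card_of_UNION_ordLeq_infinite[OF False ordLeq_refl[OF card_of_Card_order]] ballI)
  then show ?thesis using I by (rule ordLeq_ordLess_trans)
qed

lemma card_of_members_meeting_le:
  assumes "disjoint_family_on D B"
  shows "|{p\<in>B. D p \<inter> U \<noteq> {}}| \<le>o |U|"
proof -
  define f where "f p = (SOME t. t \<in> D p \<inter> U)" for p
  have f: "f p \<in> D p \<inter> U" if "p \<in> {p\<in>B. D p \<inter> U \<noteq> {}}" for p
    unfolding f_def by (rule someI_ex) (use that in blast)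
  have "inj_on f {p\<in>B. D p \<inter> U \<noteq> {}}"
  proof (rule inj_onI)
    fix p q assume p: "p \<in> {p\<in>B. D p \<inter> U \<noteq> {}}" and q: "q \<in> {p\<in>B. D p \<inter> U \<noteq> {}}"
      and "f p = f q"
    then have "D p \<inter> D q \<noteq> {}" using f[OF p] f[OF q] by auto
    then show "p = q" using disjoint_family_onD[OF assms] p q by blast
  qed
  moreover have "f ` {p\<in>B. D p \<inter> U \<noteq> {}} \<subseteq> U" using f by blast
  ultimately show ?thesis using card_of_ordLeq by blast
qed

lemma ordLess_ex_underS_ordIso:
  assumes "Card_order r" "|A| <o r"
  shows "\<exists>m\<in>Field r. |underS r m| =o |A|"
proof -
  have wr: "Well_order r" using assms(1) by (rule card_order_on_well_order_on)
  obtain m where m: "m \<in> Field r" "|A| =o Restr r (underS r m)"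
    using ordLess_iff_ordIso_Restr[OF wr card_of_Well_order] assms(2) by blast
  have "Field (Restr r (underS r m)) = underS r m"
    using Field_Restr_ofilter[OF wr wo_rel.underS_ofilter[OF Card_order_wo_rel[OF assms(1)]]] .
  then have "|underS r m| =o |A|"
    using ordIso_symmetric[OF card_of_cong[OF m(2)]] unfolding Field_card_of by simp
  with m(1) show ?thesis by blast
qed

lemma regularCard_cofinality:
  assumes r: "Card_order r" and k: "Card_order k" and cof: "is_cofinality k r"
    and th_below: "\<forall>\<alpha>\<in>Field k. |th \<alpha>| <o r"
    and th_incr: "\<forall>\<alpha>\<in>Field k. \<forall>\<beta>\<in>Field k. (\<alpha>, \<beta>) \<in> k \<and> \<alpha> \<noteq> \<beta> \<longrightarrow> |th \<alpha>| <o |th \<beta>|"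
    and th_conv: "\<forall>C. C \<subseteq> Field r \<and> |C| <o r \<longrightarrow> (\<exists>\<alpha>\<in>Field k. |C| \<le>o card_of (th \<alpha>))"
  shows "regularCard k"
  unfolding regularCard_def
proof (intro allI impI, elim conjE)
  fix D assume D: "D \<subseteq> Field k" "cofinal D k"
  have "|D| \<le>o k"
    using ordLeq_ordIso_trans[OF card_of_mono1[OF D(1)] card_of_Field_ordIso[OF k]] .
  moreover have "\<not> |D| <o k"
  proof
    assume small: "|D| <o k"
    have "\<forall>\<delta>\<in>D. \<exists>m\<in>Field r. |underS r m| =o |th \<delta>|"
      using ordLess_ex_underS_ordIso[OF r] th_below D(1) by blast
    then obtain M where M: "\<And>\<delta>. \<delta> \<in> D \<Longrightarrow> M \<delta> \<in> Field r \<and> |underS r (M \<delta>)| =o |th \<delta>|"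
      by (metis bchoice)
    have "cofinal (M ` D) r"
      unfolding cofinal_def
    proof
      fix c assume c: "c \<in> Field r"
      obtain \<alpha> where \<alpha>: "\<alpha> \<in> Field k" "|underS r c| \<le>o |th \<alpha>|"
        using th_conv card_of_underS[OF r c] Order_Relation.underS_Field[of r c] by blast
      obtain \<delta> where \<delta>: "\<delta> \<in> D" "\<alpha> \<noteq> \<delta>" "(\<alpha>, \<delta>) \<in> k"
        using D(2) \<alpha>(1) unfolding cofinal_def by blast
      have "|underS r c| <o |th \<delta>|"
        using ordLeq_ordLess_trans[OF \<alpha>(2)] th_incr \<alpha>(1) \<delta> D(1) by blast
      then have below: "|underS r c| <o |underS r (M \<delta>)|"
        using ordLess_ordIso_trans[OF _ ordIso_symmetric[OF conjunct2[OF M[OF \<delta>(1)]]]] by blast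
      have "(M \<delta>, c) \<notin> r"
      proof
        assume "(M \<delta>, c) \<in> r"
        then have "underS r (M \<delta>) \<subseteq> underS r c"
          using underS_incr[of r] wo_rel.TRANS wo_rel.ANTISYM Card_order_wo_rel[OF r] by blast
        then show False using below card_of_mono1 not_ordLess_ordLeq by blast
      qed
      then have "c \<noteq> M \<delta> \<and> (c, M \<delta>) \<in> r"
        using wo_rel.in_notinI[OF Card_order_wo_rel[OF r]] c M[OF \<delta>(1)] by blast
      with \<delta>(1) show "\<exists>m\<in>M ` D. c \<noteq> m \<and> (c, m) \<in> r" by blast
    qed
    moreover have "M ` D \<subseteq> Field r" using M by blast
    ultimately have "k \<le>o |M ` D|" using cof unfolding is_cofinality_def by blast
    moreover have "|M ` D| <o k" using ordLeq_ordLess_trans[OF card_of_image small] .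
    ultimately show False using not_ordLess_ordLeq by blast
  qed
  ultimately show "|D| =o k" using ordLeq_iff_ordLess_or_ordIso by blast
qed

lemma maximal_disjoint_subfamily:
  obtains I where "I \<subseteq> U" "disjoint_family_on Z I"
    "\<And>u. u \<in> U - I \<Longrightarrow> \<exists>v\<in>I. Z u \<inter> Z v \<noteq> {}"
proof -
  define \<F> where "\<F> = {I. I \<subseteq> U \<and> disjoint_family_on Z I}"
  have "\<Union>C \<in> \<F>" if C: "C \<in> chains \<F>" for C
  proof -
    have "disjoint_family_on Z (\<Union>C)"
      unfolding disjoint_family_on_def
    proof (intro ballI impI)
      fix u v assume "u \<in> \<Union>C" "v \<in> \<Union>C" "u \<noteq> v"
      then obtain I J where IJ: "I \<in> C" "J \<in> C" "u \<in> I" "v \<in> J" by blast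
      from C IJ(1,2) have "I \<subseteq> J \<or> J \<subseteq> I" "I \<in> \<F>" "J \<in> \<F>"
        unfolding chains_def chain_subset_def by blast+
      with IJ(3,4) \<open>u \<noteq> v\<close> show "Z u \<inter> Z v = {}"
        unfolding \<F>_def disjoint_family_on_def by blast
    qed
    moreover have "\<Union>C \<subseteq> U" using C unfolding chains_def \<F>_def by blast
    ultimately show ?thesis unfolding \<F>_def by blast
  qed
  then obtain I where I: "I \<in> \<F>" and max: "\<And>J. J \<in> \<F> \<Longrightarrow> I \<subseteq> J \<Longrightarrow> J = I"
    using Zorn_Lemma[of \<F>] by blast
  have "\<exists>v\<in>I. Z u \<inter> Z v \<noteq> {}" if u: "u \<in> U - I" for u
  proof (rule ccontr)
    assume "\<not> ?thesis"
    then have "insert u I \<in> \<F>"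
      using I u unfolding \<F>_def by (auto simp: disjoint_family_on_insert)
    with max u show False by blast
  qed
  with I that show thesis unfolding \<F>_def by blast
qed

lemma large_disjoint_subfamily:
  assumes r: "Card_order r" "\<not> finite (Field r)"
    and Z: "\<And>u. u \<in> U \<Longrightarrow> finite (Z u) \<and> Z u \<noteq> {} \<and> Z u \<subseteq> G"
    and avoid: "\<And>W. W \<subseteq> G \<Longrightarrow> |W| <o r \<Longrightarrow> \<exists>u\<in>U. Z u \<inter> W = {}"
  obtains I where "I \<subseteq> U" "disjoint_family_on Z I" "r \<le>o |I|"
proof -
  obtain I where I: "I \<subseteq> U" "disjoint_family_on Z I"
    and max: "\<And>u. u \<in> U - I \<Longrightarrow> \<exists>v\<in>I. Z u \<inter> Z v \<noteq> {}"
    using maximal_disjoint_subfamily[of U Z] by blast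
  have "r \<le>o |I|"
  proof (rule ccontr)
    assume "\<not> r \<le>o |I|"
    then have "|I| <o r" by (simp add: not_ordLeq_card_of_iff[OF r(1)])
    then have "|\<Union>v\<in>I. Z v| <o r"
      by (rule card_of_UN_finite_ordLess[OF r]) (use Z I(1) in blast)
    moreover have "(\<Union>v\<in>I. Z v) \<subseteq> G" using Z I(1) by blast
    ultimately obtain u where u: "u \<in> U" "Z u \<inter> (\<Union>v\<in>I. Z v) = {}"
      using avoid by blast
    have "u \<notin> I" using u Z by blast
    with u max show False by blast
  qed
  with I that show thesis by blast
qed

lemma delta_system_card_eq:
  assumes k: "Card_order k" "\<not> finite (Field k)" "stable k"
    and "\<And>p. p \<in> A \<Longrightarrow> finite (H p) \<and> card (H p) = n" "inj_on H A" "k \<le>o |A|"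
  shows "\<exists>P\<subseteq>A. \<exists>R. k \<le>o |P| \<and> pairwise (\<lambda>p q. H p \<inter> H q = R) P"
  using assms(4-6)
proof (induction n arbitrary: A H)
  case 0
  have "H p = {}" if "p \<in> A" for p using "0.prems"(1)[OF that] by (auto simp: card_eq_0_iff)
  then have "H ` A \<subseteq> {{}}" by blast
  then have "finite (H ` A)" by (rule finite_subset) simp
  then have "finite A" using "0.prems"(2) by (rule finite_imageD)
  then have "|A| <o k" by (rule finite_ordLess_infinite_Card_order[OF k(1,2)])
  with "0.prems"(3) have False using not_ordLess_ordLeq by blast
  then show ?case ..
next
  case (Suc n)
  show ?case
  \<comment> \<open>Either a point lies in k many sets and can be moved into the root, or every point lies
    in few sets and a maximal disjoint subfamily is already large.\<close>
  proof (cases "\<exists>d. k \<le>o |{p\<in>A. d \<in> H p}|")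
    case True
    then obtain d where d: "k \<le>o |{p\<in>A. d \<in> H p}|" by blast
    let ?A = "{p\<in>A. d \<in> H p}"
    have inj_d: "inj_on (\<lambda>p. H p - {d}) ?A"
    proof (rule inj_onI)
      fix p q assume p: "p \<in> ?A" and q: "q \<in> ?A" and eq: "H p - {d} = H q - {d}"
      have "H p = H q" using insert_Diff[of d "H p"] insert_Diff[of d "H q"] p q eq by simp
      with p q show "p = q" using inj_onD[OF Suc.prems(2)] by blast
    qed
    have fin_d: "finite (H p - {d}) \<and> card (H p - {d}) = n" if "p \<in> ?A" for p
      using Suc.prems(1)[of p] that by simp
    obtain P R where P: "P \<subseteq> ?A" "k \<le>o |P|"
      and root: "pairwise (\<lambda>p q. (H p - {d}) \<inter> (H q - {d}) = R) P"
      using Suc.IH[OF fin_d inj_d d] by blast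
    have "H p \<inter> H q = insert d ((H p - {d}) \<inter> (H q - {d}))" if "p \<in> P" "q \<in> P" for p q
      using that P(1) by blast
    with root have "pairwise (\<lambda>p q. H p \<inter> H q = insert d R) P"
      unfolding pairwise_def by simp
    moreover have "P \<subseteq> A" using P(1) by blast
    ultimately show ?thesis using P(2) by blast
  next
    case False
    then have few: "|{p\<in>A. d \<in> H p}| <o k" for d
      by (simp add: not_ordLeq_card_of_iff[OF k(1)])
    have avoid: "\<exists>p\<in>A. H p \<inter> W = {}" if "|W| <o k" for W
    proof -
      have small: "|\<Union>d\<in>W. {p\<in>A. d \<in> H p}| <o k" by (rule stable_UNION[OF k(3) that few])
      have "\<not> A \<subseteq> (\<Union>d\<in>W. {p\<in>A. d \<in> H p})"
      proof
        assume "A \<subseteq> (\<Union>d\<in>W. {p\<in>A. d \<in> H p})"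
        from ordLeq_transitive[OF Suc.prems(3) card_of_mono1[OF this]] small
        show False using not_ordLess_ordLeq by blast
      qed
      then show ?thesis by blast
    qed
    have "finite (H p) \<and> H p \<noteq> {} \<and> H p \<subseteq> UNIV" if "p \<in> A" for p
      using Suc.prems(1)[OF that] by auto
    then obtain P where P: "P \<subseteq> A" "disjoint_family_on H P" "k \<le>o |P|"
      using large_disjoint_subfamily[OF k(1,2), of A H UNIV] avoid by blast
    from P(2) have "pairwise (\<lambda>p q. H p \<inter> H q = {}) P"
      unfolding disjoint_family_on_def pairwise_def .
    with P(1,3) show ?thesis by blast
  qed
qed

lemma delta_system_lemma:
  assumes k: "Card_order k" "\<not> finite (Field k)" "stable k" "natLeq <o k"
    and fin: "\<And>p. p \<in> A \<Longrightarrow> finite (H p)" and inj: "inj_on H A" and A: "k \<le>o |A|"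
  obtains P R where "P \<subseteq> A" "k \<le>o |P|" "pairwise (\<lambda>p q. H p \<inter> H q = R) P"
proof -
  have "\<exists>n. k \<le>o |{p\<in>A. card (H p) = n}|"
  proof (rule ccontr)
    assume "\<nexists>n. k \<le>o |{p\<in>A. card (H p) = n}|"
    then have "|{p\<in>A. card (H p) = n}| <o k" for n
      by (simp add: not_ordLeq_card_of_iff[OF k(1)])
    moreover have "|UNIV :: nat set| <o k" using ordIso_ordLess_trans[OF card_of_nat k(4)] .
    ultimately have "|\<Union>n. {p\<in>A. card (H p) = n}| <o k" by (intro stable_UNION[OF k(3)])
    moreover have "(\<Union>n. {p\<in>A. card (H p) = n}) = A" by blast
    ultimately have "|A| <o k" by simp
    with A show False using not_ordLess_ordLeq by blast
  qed
  then obtain n where n: "k \<le>o |{p\<in>A. card (H p) = n}|" by blast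
  have inj_n: "inj_on H {p\<in>A. card (H p) = n}" using inj by (rule inj_on_subset) blast
  have "\<exists>P\<subseteq>{p\<in>A. card (H p) = n}. \<exists>R. k \<le>o |P| \<and> pairwise (\<lambda>p q. H p \<inter> H q = R) P"
    by (rule delta_system_card_eq[OF k(1-3) _ inj_n n]) (use fin in simp)
  then show thesis using that by blast
qed

lemma delta_system_pairs:
  fixes A :: "('a set \<times> 'b set) set"
  assumes k: "Card_order k" "\<not> finite (Field k)" "stable k" "natLeq <o k"
    and fin: "\<And>p. p \<in> A \<Longrightarrow> finite (fst p) \<and> finite (snd p)" and A: "k \<le>o |A|"
  obtains P R1 R2 where "P \<subseteq> A" "k \<le>o |P|"
    "pairwise (\<lambda>p q. fst p \<inter> fst q = R1) P" "pairwise (\<lambda>p q. snd p \<inter> snd q = R2) P"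
proof -
  define H where "H p = (Inl ` fst p \<union> Inr ` snd p :: ('a + 'b) set)" for p :: "'a set \<times> 'b set"
  have fst_H: "Inl -` H p = fst p" and snd_H: "Inr -` H p = snd p" for p
    unfolding H_def by auto
  have "inj_on H A" by (rule inj_onI) (metis fst_H snd_H prod_eqI)
  moreover have "finite (H p)" if "p \<in> A" for p using fin[OF that] unfolding H_def by simp
  ultimately obtain P R where P: "P \<subseteq> A" "k \<le>o |P|" and root: "pairwise (\<lambda>p q. H p \<inter> H q = R) P"
    using delta_system_lemma[OF k, of A H] A by blast
  have "pairwise (\<lambda>p q. fst p \<inter> fst q = Inl -` R) P" "pairwise (\<lambda>p q. snd p \<inter> snd q = Inr -` R) P"
    using root unfolding pairwise_def by (metis fst_H snd_H vimage_Int)+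
  with P that show thesis by blast
qed

lemma capA_antimono: "B \<subseteq> C \<Longrightarrow> capA a C \<subseteq> capA a B"
  unfolding capA_def by blast

lemma capA_empty [simp]: "capA a {} = UNIV"
  unfolding capA_def by simp

lemma disj_fin_family_disjoint_family_on:
  "disj_fin_family \<Theta> x \<Longrightarrow> disjoint_family_on x \<Theta>"
  unfolding disj_fin_family_def disjoint_family_on_def by blast

definition separated ::
  "('a \<Rightarrow> nat set) \<Rightarrow> ('a \<Rightarrow> nat set) \<Rightarrow> ('a \<Rightarrow> 'a set) \<Rightarrow> ('b \<Rightarrow> 'a set) \<Rightarrow> 'b \<Rightarrow> 'b \<Rightarrow> bool" where
  "separated a b x S \<alpha> \<beta> \<longleftrightarrow>
     (\<forall>i\<in>S \<alpha>. \<forall>j\<in>S \<beta>. capA a (x i) \<inter> capA b (x j) = {} \<and> capA b (x i) \<inter> capA a (x j) = {})"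

lemma separated_sym: "separated a b x S \<alpha> \<beta> \<longleftrightarrow> separated a b x S \<beta> \<alpha>"
  unfolding separated_def by blast

lemma Qposet_iff:
  "F \<in> Qposet K a b x S \<longleftrightarrow> finite F \<and> F \<subseteq> K \<and> pairwise (\<lambda>\<alpha> \<beta>. \<not> separated a b x S \<alpha> \<beta>) F"
  unfolding Qposet_def separated_def pairwise_def by blast

lemma Qposet_Un_separated:
  assumes F: "F \<in> Qposet K a b x S" and G: "G \<in> Qposet K a b x S" and FG: "F \<union> G \<notin> Qposet K a b x S"
  shows "\<exists>\<alpha>\<in>F - G. \<exists>\<beta>\<in>G - F. separated a b x S \<alpha> \<beta>"
proof -
  have "finite (F \<union> G)" "F \<union> G \<subseteq> K" using F G unfolding Qposet_iff by blast+
  with FG have "\<not> pairwise (\<lambda>\<alpha> \<beta>. \<not> separated a b x S \<alpha> \<beta>) (F \<union> G)"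
    unfolding Qposet_iff by blast
  then obtain \<alpha> \<beta> where \<alpha>\<beta>: "\<alpha> \<in> F \<union> G" "\<beta> \<in> F \<union> G" "\<alpha> \<noteq> \<beta>" "separated a b x S \<alpha> \<beta>"
    unfolding pairwise_def by blast
  have "\<not> (\<alpha> \<in> F \<and> \<beta> \<in> F)" "\<not> (\<alpha> \<in> G \<and> \<beta> \<in> G)"
    using F G \<alpha>\<beta>(3,4) unfolding Qposet_iff pairwise_def by blast+
  show ?thesis
  proof (cases "\<alpha> \<in> F")
    case True
    with \<alpha>\<beta> \<open>\<not> (\<alpha> \<in> F \<and> \<beta> \<in> F)\<close> \<open>\<not> (\<alpha> \<in> G \<and> \<beta> \<in> G)\<close>
    show ?thesis by blast
  next
    case False
    with \<alpha>\<beta> \<open>\<not> (\<alpha> \<in> G \<and> \<beta> \<in> G)\<close> have "\<beta> \<in> F - G" "\<alpha> \<in> G - F" by blast+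
    with \<alpha>\<beta>(4) show ?thesis unfolding separated_sym[of a b x S \<alpha>] by blast
  qed
qed

lemma X_sequenceD:
  assumes "X_sequence \<Theta> K th a b x S" "\<alpha> \<in> K"
  shows "S \<alpha> \<subseteq> \<Theta>" "|th \<alpha>| <o |S \<alpha>|"
  using assms unfolding X_sequence_def by auto

lemma X_sequence_separated_self:
  "X_sequence \<Theta> K th a b x S \<Longrightarrow> \<alpha> \<in> K \<Longrightarrow> separated a b x S \<alpha> \<alpha>"
  unfolding X_sequence_def separated_def by blast

lemma exists_disjoint_family_full_size:
  assumes B: "\<not> finite B" and K: "|K| \<le>o |B|"
  obtains S where "disjoint_family_on S K" "\<And>\<alpha>. \<alpha> \<in> K \<Longrightarrow> S \<alpha> \<subseteq> B \<and> |S \<alpha>| =o |B|"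
proof -
  obtain e where e: "inj_on e K" "e ` K \<subseteq> B" using K unfolding card_of_ordLeq[symmetric] by blast
  obtain \<pi> where "bij_betw \<pi> (B \<times> B) B"
    using card_of_Times_same_infinite[OF B] unfolding card_of_ordIso[symmetric] by blast
  then have inj: "inj_on \<pi> (B \<times> B)" and img: "\<pi> ` (B \<times> B) = B"
    unfolding bij_betw_def by blast+
  define S where "S \<alpha> = \<pi> ` ({e \<alpha>} \<times> B)" for \<alpha>
  have "S \<alpha> \<inter> S \<beta> = {}" if "\<alpha> \<in> K" "\<beta> \<in> K" "\<alpha> \<noteq> \<beta>" for \<alpha> \<beta>
  proof -
    have "e \<alpha> \<noteq> e \<beta>" using inj_onD[OF e(1)] that by blast
    moreover have "S \<alpha> \<inter> S \<beta> = \<pi> ` ({e \<alpha>} \<times> B \<inter> {e \<beta>} \<times> B)"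
      unfolding S_def using that e(2) by (intro inj_on_image_Int[OF inj, symmetric]) blast+
    ultimately show ?thesis by blast
  qed
  then have "disjoint_family_on S K" unfolding disjoint_family_on_def by blast
  moreover have "S \<alpha> \<subseteq> B \<and> |S \<alpha>| =o |B|" if "\<alpha> \<in> K" for \<alpha>
  proof
    have eB: "e \<alpha> \<in> B" using e(2) that by blast
    then have "{e \<alpha>} \<times> B \<subseteq> B \<times> B" by blast
    then show "S \<alpha> \<subseteq> B" unfolding S_def using img by blast
    have "inj_on (\<lambda>t. \<pi> (e \<alpha>, t)) B"
    proof (rule inj_onI)
      fix s t assume "s \<in> B" "t \<in> B" "\<pi> (e \<alpha>, s) = \<pi> (e \<alpha>, t)"
      with eB have "(e \<alpha>, s) = (e \<alpha>, t)" by (intro inj_onD[OF inj]) auto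
      then show "s = t" by simp
    qed
    moreover have "S \<alpha> = (\<lambda>t. \<pi> (e \<alpha>, t)) ` B" unfolding S_def by auto
    ultimately have "bij_betw (\<lambda>t. \<pi> (e \<alpha>, t)) B (S \<alpha>)" by (simp add: bij_betw_def)
    then have "|B| =o |S \<alpha>|" using card_of_ordIso by blast
    then show "|S \<alpha>| =o |B|" by (rule ordIso_symmetric)
  qed
  ultimately show thesis by (rule that)
qed

lemma prod_kappa_cc_imp_nice_pair:
  assumes r: "Card_order r" "\<not> finite (Field r)" and k: "Card_order k" "k <o r"
    and th_below: "\<forall>\<alpha>\<in>Field k. |th \<alpha>| <o r"
    and cc: "\<And>x S. disj_fin_family (Field r) x \<Longrightarrow> X_sequence (Field r) (Field k) th a b x S \<Longrightarrow>
      prod_kappa_cc (Field k) (Qposet (Field k) a b x S) (Qposet (Field k) a b x S)"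
  shows "nice_pair (Field r) a b"
  unfolding nice_pair_def
proof (intro allI impI, rule ccontr)
  fix z assume z: "disj_fin_family (Field r) z"
    and "\<not> (\<exists>i\<in>Field r. \<exists>j\<in>Field r. capA a (z i) \<inter> capA b (z j) \<noteq> {})"
  then have unlinked: "capA a (z i) \<inter> capA b (z j) = {}" if "i \<in> Field r" "j \<in> Field r" for i j
    using that by blast
  have "|Field k| \<le>o |Field r|" by (rule card_of_mono2[OF ordLess_imp_ordLeq[OF k(2)]])
  then obtain S where S_disj: "disjoint_family_on S (Field k)"
    and S: "\<And>\<alpha>. \<alpha> \<in> Field k \<Longrightarrow> S \<alpha> \<subseteq> Field r \<and> |S \<alpha>| =o |Field r|"
    using exists_disjoint_family_full_size[OF r(2)] by blast
  have "|th \<alpha>| <o |S \<alpha>|" if "\<alpha> \<in> Field k" for \<alpha>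
  proof -
    have "r =o |S \<alpha>|"
      using ordIso_transitive[OF ordIso_symmetric[OF card_of_Field_ordIso[OF r(1)]]
          ordIso_symmetric[OF conjunct2[OF S[OF that]]]] .
    with th_below that show ?thesis using ordLess_ordIso_trans by blast
  qed
  then have XS: "X_sequence (Field r) (Field k) th a b z S"
    unfolding X_sequence_def using S S_disj unlinked unfolding disjoint_family_on_def by blast
  have sep: "separated a b z S \<alpha> \<beta>" if "\<alpha> \<in> Field k" "\<beta> \<in> Field k" for \<alpha> \<beta>
    unfolding separated_def using S[OF that(1)] S[OF that(2)] unlinked by blast
  define Q where "Q = Qposet (Field k) a b z S"
  define D where "D = (\<lambda>\<alpha>. ({\<alpha>}, {\<alpha>})) ` Field k"
  have "{\<alpha>} \<in> Q" if "\<alpha> \<in> Field k" for \<alpha>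
    unfolding Q_def Qposet_iff using that by (simp add: pairwise_singleton)
  moreover have "{\<alpha>} \<union> {\<beta>} \<notin> Q" if "\<alpha> \<in> Field k" "\<beta> \<in> Field k" "\<alpha> \<noteq> \<beta>" for \<alpha> \<beta>
    unfolding Q_def Qposet_iff pairwise_def using sep[OF that(1,2)] that(3) by blast
  ultimately have "prod_antichain Q Q D"
    unfolding prod_antichain_def prod_compatible_def D_def by auto
  then have "|D| <o |Field k|" using cc[OF z XS] unfolding prod_kappa_cc_def Q_def by blast
  moreover have "bij_betw (\<lambda>\<alpha>. ({\<alpha>}, {\<alpha>})) (Field k) D"
    unfolding D_def bij_betw_def inj_on_def by blast
  then have "|D| =o |Field k|" using card_of_ordIso ordIso_symmetric by blast
  ultimately show False using not_ordLess_ordIso by blast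
qed

lemma exists_choice_avoiding:
  assumes x: "disjoint_family_on x D" and S: "\<And>\<alpha>. \<alpha> \<in> E \<Longrightarrow> S \<alpha> \<subseteq> D \<and> |W| <o |S \<alpha>|"
  shows "\<exists>f. \<forall>\<alpha>\<in>E. f \<alpha> \<in> S \<alpha> \<and> x (f \<alpha>) \<inter> W = {}"
proof -
  have "\<exists>i\<in>S \<alpha>. x i \<inter> W = {}" if \<alpha>: "\<alpha> \<in> E" for \<alpha>
  proof (rule ccontr)
    assume "\<not> ?thesis"
    then have "S \<alpha> = {i\<in>S \<alpha>. x i \<inter> W \<noteq> {}}" by blast
    moreover have "disjoint_family_on x (S \<alpha>)" using disjoint_family_on_mono S[OF \<alpha>] x by blast
    ultimately have "|S \<alpha>| \<le>o |W|" using card_of_members_meeting_le[of x "S \<alpha>" W] by simp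
    with S[OF \<alpha>] show False using not_ordLess_ordLeq by blast
  qed
  then have "\<forall>\<alpha>\<in>E. \<exists>i. i \<in> S \<alpha> \<and> x i \<inter> W = {}" by blast
  then show ?thesis by (rule bchoice)
qed

lemma nice_pair_disjoint_family:
  assumes nice: "nice_pair \<Theta> a b" and Z: "\<And>u. u \<in> I \<Longrightarrow> finite (Z u) \<and> Z u \<subseteq> \<Theta>"
    and disj: "disjoint_family_on Z I" and I: "|\<Theta>| \<le>o |I|"
  obtains u v where "u \<in> I" "v \<in> I" "capA a (Z u) \<inter> capA b (Z v) \<noteq> {}"
proof -
  obtain G where G: "inj_on G \<Theta>" "G ` \<Theta> \<subseteq> I" using I unfolding card_of_ordLeq[symmetric] by blast
  have "Z (G i) \<inter> Z (G j) = {}" if "i \<in> \<Theta>" "j \<in> \<Theta>" "i \<noteq> j" for i j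
    using disjoint_family_onD[OF disj] inj_onD[OF G(1)] G(2) that by blast
  then have "disj_fin_family \<Theta> (\<lambda>i. Z (G i))"
    unfolding disj_fin_family_def using Z G(2) by blast
  then obtain i j where "i \<in> \<Theta>" "j \<in> \<Theta>" "capA a (Z (G i)) \<inter> capA b (Z (G j)) \<noteq> {}"
    using nice unfolding nice_pair_def by blast
  with G(2) that show thesis by blast
qed

lemma nice_pair_no_separating_system:
  assumes r: "Card_order r" "\<not> finite (Field r)" and k: "Card_order k" "\<not> finite (Field k)"
    and th_incr: "\<forall>\<alpha>\<in>Field k. \<forall>\<beta>\<in>Field k. (\<alpha>, \<beta>) \<in> k \<and> \<alpha> \<noteq> \<beta> \<longrightarrow> |th \<alpha>| <o |th \<beta>|"
    and th_conv: "\<forall>C. C \<subseteq> Field r \<and> |C| <o r \<longrightarrow> (\<exists>\<alpha>\<in>Field k. |C| \<le>o card_of (th \<alpha>))"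
    and nice: "nice_pair (Field r) a b"
    and x: "disj_fin_family (Field r) x" and y: "disj_fin_family (Field r) y"
    and XS: "X_sequence (Field r) (Field k) th a b x S" and YT: "X_sequence (Field r) (Field k) th a b y T"
    and P: "k \<le>o |P|"
    and E: "\<And>p. p \<in> P \<Longrightarrow> finite (E1 p) \<and> E1 p \<subseteq> Field k \<and> finite (E2 p) \<and> E2 p \<subseteq> Field k"
    and E_disj: "disjoint_family_on E1 P" "disjoint_family_on E2 P"
    and sep: "\<And>p q. p \<in> P \<Longrightarrow> q \<in> P \<Longrightarrow>
      (\<exists>\<alpha>\<in>E1 p. \<exists>\<beta>\<in>E1 q. separated a b x S \<alpha> \<beta>) \<or> (\<exists>\<alpha>\<in>E2 p. \<exists>\<beta>\<in>E2 q. separated a b y T \<alpha> \<beta>)"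
  shows False
proof -
  note S = X_sequenceD[OF XS] and T = X_sequenceD[OF YT]
  define U where "U = {(p, f, g). p \<in> P \<and> (\<forall>\<alpha>\<in>E1 p. f \<alpha> \<in> S \<alpha>) \<and> (\<forall>\<beta>\<in>E2 p. g \<beta> \<in> T \<beta>)}"
  define Z where "Z = (\<lambda>(p, f, g). (\<Union>\<alpha>\<in>E1 p. x (f \<alpha>)) \<union> (\<Union>\<beta>\<in>E2 p. y (g \<beta>)))"
  have cross: "capA a (Z u) \<inter> capA b (Z v) = {}" if "u \<in> U" "v \<in> U" for u v
  proof -
    obtain p f g p' f' g' where u: "u = (p, f, g)" and v: "v = (p', f', g')"
      by (cases u, cases v)
    have u': "p \<in> P" "\<forall>\<alpha>\<in>E1 p. f \<alpha> \<in> S \<alpha>" "\<forall>\<beta>\<in>E2 p. g \<beta> \<in> T \<beta>"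
      and v': "p' \<in> P" "\<forall>\<alpha>\<in>E1 p'. f' \<alpha> \<in> S \<alpha>" "\<forall>\<beta>\<in>E2 p'. g' \<beta> \<in> T \<beta>"
      using that unfolding u v U_def by simp_all
    from sep[OF u'(1) v'(1)] show ?thesis
    proof (elim disjE bexE)
      fix \<alpha> \<beta> assume \<alpha>: "\<alpha> \<in> E1 p" and \<beta>: "\<beta> \<in> E1 p'" and "separated a b x S \<alpha> \<beta>"
      then have "capA a (x (f \<alpha>)) \<inter> capA b (x (f' \<beta>)) = {}"
        using u'(2) v'(2) unfolding separated_def by blast
      moreover have "capA a (Z u) \<subseteq> capA a (x (f \<alpha>))" "capA b (Z v) \<subseteq> capA b (x (f' \<beta>))"
        using \<alpha> \<beta> unfolding u v Z_def by (auto intro!: capA_antimono)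
      ultimately show ?thesis by blast
    next
      fix \<alpha> \<beta> assume \<alpha>: "\<alpha> \<in> E2 p" and \<beta>: "\<beta> \<in> E2 p'" and "separated a b y T \<alpha> \<beta>"
      then have "capA a (y (g \<alpha>)) \<inter> capA b (y (g' \<beta>)) = {}"
        using u'(3) v'(3) unfolding separated_def by blast
      moreover have "capA a (Z u) \<subseteq> capA a (y (g \<alpha>))" "capA b (Z v) \<subseteq> capA b (y (g' \<beta>))"
        using \<alpha> \<beta> unfolding u v Z_def by (auto intro!: capA_antimono)
      ultimately show ?thesis by blast
    qed
  qed
  have Z: "finite (Z u) \<and> Z u \<noteq> {} \<and> Z u \<subseteq> Field r" if u: "u \<in> U" for u
  proof (intro conjI)
    show "Z u \<noteq> {}" using cross[OF u u] by auto
    obtain p f g where pfg: "u = (p, f, g)" by (cases u)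
    have p: "p \<in> P" and f: "\<forall>\<alpha>\<in>E1 p. f \<alpha> \<in> S \<alpha>" and g: "\<forall>\<beta>\<in>E2 p. g \<beta> \<in> T \<beta>"
      using u unfolding pfg U_def by simp_all
    have "finite (x (f \<alpha>)) \<and> x (f \<alpha>) \<subseteq> Field r" if "\<alpha> \<in> E1 p" for \<alpha>
      using x f S(1) E[OF p] that unfolding disj_fin_family_def by blast
    moreover have "finite (y (g \<beta>)) \<and> y (g \<beta>) \<subseteq> Field r" if "\<beta> \<in> E2 p" for \<beta>
      using y g T(1) E[OF p] that unfolding disj_fin_family_def by blast
    ultimately show "finite (Z u)" "Z u \<subseteq> Field r"
      unfolding pfg Z_def using E[OF p] by auto
  qed
  have avoid: "\<exists>u\<in>U. Z u \<inter> W = {}" if W: "W \<subseteq> Field r" "|W| <o r" for W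
  proof -
    obtain \<gamma> where \<gamma>: "\<gamma> \<in> Field k" "|W| \<le>o |th \<gamma>|" using th_conv W by blast
    let ?B = "\<lambda>E. {p\<in>P. E p \<inter> underS k \<gamma> \<noteq> {}}"
    have small: "|underS k \<gamma>| <o k" by (rule card_of_underS[OF k(1) \<gamma>(1)])
    have "|?B E1| <o k" "|?B E2| <o k"
      using ordLeq_ordLess_trans[OF card_of_members_meeting_le small] E_disj by blast+
    then have few: "|?B E1 \<union> ?B E2| <o k" by (rule card_of_Un_ordLess_infinite_Field[OF k(2,1)])
    have "\<not> P \<subseteq> ?B E1 \<union> ?B E2"
    proof
      assume "P \<subseteq> ?B E1 \<union> ?B E2"
      from ordLeq_transitive[OF P card_of_mono1[OF this]] few show False
        using not_ordLess_ordLeq by blast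
    qed
    then obtain p where p: "p \<in> P" "E1 p \<inter> underS k \<gamma> = {}" "E2 p \<inter> underS k \<gamma> = {}"
      by blast
    have above: "|W| <o |S \<alpha>| \<and> |W| <o |T \<alpha>|" if \<alpha>: "\<alpha> \<in> Field k" "\<alpha> \<notin> underS k \<gamma>" for \<alpha>
    proof -
      have "|th \<gamma>| \<le>o |th \<alpha>|"
      proof (cases "\<alpha> = \<gamma>")
        case True
        then show ?thesis by (simp add: ordLeq_refl[OF card_of_Card_order])
      next
        case False
        with \<alpha> have "(\<gamma>, \<alpha>) \<in> k"
          using wo_rel.in_notinI[OF Card_order_wo_rel[OF k(1)]] \<gamma>(1) unfolding underS_def by blast
        with False \<alpha>(1) \<gamma>(1) th_incr show ?thesis by (blast intro: ordLess_imp_ordLeq)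
      qed
      then have "|W| \<le>o |th \<alpha>|" by (rule ordLeq_transitive[OF \<gamma>(2)])
      then show ?thesis using S[OF \<alpha>(1)] T[OF \<alpha>(1)] ordLeq_ordLess_trans by blast
    qed
    have S_big: "S \<alpha> \<subseteq> Field r \<and> |W| <o |S \<alpha>|" if "\<alpha> \<in> E1 p" for \<alpha>
      using S above E[OF p(1)] p(2) that by blast
    have "\<exists>f. \<forall>\<alpha>\<in>E1 p. f \<alpha> \<in> S \<alpha> \<and> x (f \<alpha>) \<inter> W = {}"
      using disj_fin_family_disjoint_family_on[OF x] S_big by (rule exists_choice_avoiding)
    then obtain f where f: "\<And>\<alpha>. \<alpha> \<in> E1 p \<Longrightarrow> f \<alpha> \<in> S \<alpha> \<and> x (f \<alpha>) \<inter> W = {}"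
      by blast
    have T_big: "T \<beta> \<subseteq> Field r \<and> |W| <o |T \<beta>|" if "\<beta> \<in> E2 p" for \<beta>
      using T above E[OF p(1)] p(3) that by blast
    have "\<exists>g. \<forall>\<beta>\<in>E2 p. g \<beta> \<in> T \<beta> \<and> y (g \<beta>) \<inter> W = {}"
      using disj_fin_family_disjoint_family_on[OF y] T_big by (rule exists_choice_avoiding)
    then obtain g where g: "\<And>\<beta>. \<beta> \<in> E2 p \<Longrightarrow> g \<beta> \<in> T \<beta> \<and> y (g \<beta>) \<inter> W = {}"
      by blast
    have "(p, f, g) \<in> U" unfolding U_def using p(1) f g by blast
    moreover have "Z (p, f, g) \<inter> W = {}" unfolding Z_def using f g by auto
    ultimately show ?thesis by blast
  qed
  obtain I where I: "I \<subseteq> U" "disjoint_family_on Z I" "r \<le>o |I|"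
    by (rule large_disjoint_subfamily[OF r Z avoid])
  have "|Field r| \<le>o |I|" by (rule ordIso_ordLeq_trans[OF card_of_Field_ordIso[OF r(1)] I(3)])
  moreover have "finite (Z u) \<and> Z u \<subseteq> Field r" if "u \<in> I" for u
    using Z I(1) that by blast
  ultimately obtain u v where "u \<in> I" "v \<in> I" "capA a (Z u) \<inter> capA b (Z v) \<noteq> {}"
    using nice_pair_disjoint_family[OF nice _ I(2)] by blast
  with cross I(1) show False by blast
qed

lemma nice_pair_imp_prod_kappa_cc:
  assumes r: "Card_order r" "\<not> finite (Field r)"
    and k: "Card_order k" "\<not> finite (Field k)" "stable k" "natLeq <o k"
    and th_incr: "\<forall>\<alpha>\<in>Field k. \<forall>\<beta>\<in>Field k. (\<alpha>, \<beta>) \<in> k \<and> \<alpha> \<noteq> \<beta> \<longrightarrow> |th \<alpha>| <o |th \<beta>|"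
    and th_conv: "\<forall>C. C \<subseteq> Field r \<and> |C| <o r \<longrightarrow> (\<exists>\<alpha>\<in>Field k. |C| \<le>o card_of (th \<alpha>))"
    and nice: "nice_pair (Field r) a b"
    and x: "disj_fin_family (Field r) x" and y: "disj_fin_family (Field r) y"
    and XS: "X_sequence (Field r) (Field k) th a b x S" and YT: "X_sequence (Field r) (Field k) th a b y T"
  shows "prod_kappa_cc (Field k) (Qposet (Field k) a b x S) (Qposet (Field k) a b y T)"
  unfolding prod_kappa_cc_def
proof (intro allI impI)
  fix A assume A: "prod_antichain (Qposet (Field k) a b x S) (Qposet (Field k) a b y T) A"
  then have A_Q: "fst p \<in> Qposet (Field k) a b x S \<and> snd p \<in> Qposet (Field k) a b y T" if "p \<in> A" for p
    using that unfolding prod_antichain_def by auto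
  show "|A| <o |Field k|"
  proof (rule ccontr)
    assume "\<not> |A| <o |Field k|"
    then have "k \<le>o |A|"
      using not_ordLess_iff_ordLeq[OF card_of_Well_order card_of_Well_order]
        ordIso_ordLeq_trans[OF ordIso_symmetric[OF card_of_Field_ordIso[OF k(1)]]] by blast
    moreover have "finite (fst p) \<and> finite (snd p)" if "p \<in> A" for p
      using A_Q[OF that] unfolding Qposet_iff by blast
    ultimately obtain P R1 R2 where P: "P \<subseteq> A" "k \<le>o |P|"
      and R1: "pairwise (\<lambda>p q. fst p \<inter> fst q = R1) P" and R2: "pairwise (\<lambda>p q. snd p \<inter> snd q = R2) P"
      using delta_system_pairs[OF k] by blast
    define E1 where "E1 p = fst p - R1" for p :: "'b set \<times> 'b set"
    define E2 where "E2 p = snd p - R2" for p :: "'b set \<times> 'b set"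
    have E: "finite (E1 p) \<and> E1 p \<subseteq> Field k \<and> finite (E2 p) \<and> E2 p \<subseteq> Field k" if "p \<in> P" for p
      using A_Q[of p] P(1) that unfolding E1_def E2_def Qposet_iff by blast
    have E_disj: "disjoint_family_on E1 P" "disjoint_family_on E2 P"
      using R1 R2 unfolding E1_def E2_def disjoint_family_on_def pairwise_def by blast+
    have sep_distinct: "(\<exists>\<alpha>\<in>E1 p. \<exists>\<beta>\<in>E1 q. separated a b x S \<alpha> \<beta>) \<or> (\<exists>\<alpha>\<in>E2 p. \<exists>\<beta>\<in>E2 q. separated a b y T \<alpha> \<beta>)"
      if pq: "p \<in> P" "q \<in> P" "p \<noteq> q" for p q
    proof -
      have "fst p \<inter> fst q = R1" "snd p \<inter> snd q = R2" using R1 R2 pq unfolding pairwise_def by blast+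
      moreover have "\<not> prod_compatible (Qposet (Field k) a b x S) (Qposet (Field k) a b y T) p q"
        using A P(1) pq unfolding prod_antichain_def by blast
      ultimately show ?thesis
        using Qposet_Un_separated[of "fst p" _ a b x S "fst q"] Qposet_Un_separated[of "snd p" _ a b y T "snd q"]
          A_Q[of p] A_Q[of q] P(1) pq(1,2) unfolding prod_compatible_def E1_def E2_def by blast
    qed
    have "\<not> finite P"
      using P(2) finite_ordLess_infinite_Card_order[OF k(1,2)] not_ordLess_ordLeq by blast
    have sep: "(\<exists>\<alpha>\<in>E1 p. \<exists>\<beta>\<in>E1 q. separated a b x S \<alpha> \<beta>) \<or> (\<exists>\<alpha>\<in>E2 p. \<exists>\<beta>\<in>E2 q. separated a b y T \<alpha> \<beta>)"
      if pq: "p \<in> P" "q \<in> P" for p q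
    proof (cases "p = q")
      case True
      from infinite_imp_nonempty[OF infinite_remove[OF \<open>\<not> finite P\<close>, of p]]
      obtain q' where "q' \<in> P" "q' \<noteq> p" by blast
      then have "(\<exists>\<alpha>. \<alpha> \<in> E1 p) \<or> (\<exists>\<alpha>. \<alpha> \<in> E2 p)" using sep_distinct[OF pq(1)] by blast
      then show ?thesis
        using X_sequence_separated_self[OF XS] X_sequence_separated_self[OF YT] E[OF pq(1)] True by blast
    next
      case False
      then show ?thesis by (rule sep_distinct[OF pq])
    qed
    show False
      using nice_pair_no_separating_system[OF r k(1,2) th_incr th_conv nice x y XS YT P(2) E E_disj sep] .
  qed
qed

theorem lemma1:
  fixes r :: "'a rel" and k :: "'b rel" and th :: "'b \<Rightarrow> 'a set"
    and \<alpha>0 :: 'b and a b :: "'a \<Rightarrow> nat set"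
  assumes card_r: "Card_order r" and inf_r: "\<not> finite (Field r)"
    and card_k: "Card_order k"
    and cof: "is_cofinality k r"
    and singular: "(k, r) \<in> ordLess"
    and uncountable_cof: "(natLeq, k) \<in> ordLess"
    and th_sub: "\<forall>\<alpha>\<in>Field k. th \<alpha> \<subseteq> Field r"
    and th_below: "\<forall>\<alpha>\<in>Field k. (card_of (th \<alpha>), r) \<in> ordLess"
    and th_incr: "\<forall>\<alpha>\<in>Field k. \<forall>\<beta>\<in>Field k. (\<alpha>, \<beta>) \<in> k \<and> \<alpha> \<noteq> \<beta> \<longrightarrow> (card_of (th \<alpha>), card_of (th \<beta>)) \<in> ordLess"
    and th_conv: "\<forall>C. C \<subseteq> Field r \<and> (card_of (C), r) \<in> ordLess \<longrightarrow> (\<exists>\<alpha>\<in>Field k. (card_of (C), card_of (th \<alpha>)) \<in> ordLeq)"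
    and \<alpha>0_least: "\<alpha>0 \<in> Field k" "\<forall>\<beta>\<in>Field k. (\<alpha>0, \<beta>) \<in> k"
    and th0: "(k, card_of (th \<alpha>0)) \<in> ordLess"
    and pair: "theta_pair (Field r) a b"
  shows "nice_pair (Field r) a b \<longleftrightarrow>
    (\<forall>x y S T. disj_fin_family (Field r) x \<and> disj_fin_family (Field r) y \<and>
       X_sequence (Field r) (Field k) th a b x S \<and> X_sequence (Field r) (Field k) th a b y T
       \<longrightarrow> prod_kappa_cc (Field k) (Qposet (Field k) a b x S) (Qposet (Field k) a b y T))"
proof -
  have "natLeq \<le>o |Field k|"
    using ordLeq_ordIso_trans[OF ordLess_imp_ordLeq[OF uncountable_cof]
        ordIso_symmetric[OF card_of_Field_ordIso[OF card_k]]] .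
  then have inf_k: "\<not> finite (Field k)" using infinite_iff_natLeq_ordLeq by blast
  have "regularCard k" by (rule regularCard_cofinality[OF card_r card_k cof th_below th_incr th_conv])
  then have "stable k" by (rule regularCard_stable[OF card_k inf_k])
  show ?thesis
    using nice_pair_imp_prod_kappa_cc[OF card_r inf_r card_k inf_k \<open>stable k\<close> uncountable_cof th_incr th_conv]
      prod_kappa_cc_imp_nice_pair[OF card_r inf_r card_k singular th_below]
    by blast
qed

end
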